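(* Let $k$ be a commutative ring with unit and $A=k[t_1,\ldots,t_r]$ graded with each $t_i$ of degree $2$. Let $M$ be a graded $A$-module, bounded from below, with $\operatorname{Tor}^A_1(M,k)=0$. Let $S\subset A$ be the multiplicative subset generated by those elements of $A^2$ which can be extended to a basis of the $k$-module $A^2$. Then the localisation map $M\to S^{-1}M$ is injective.
   Context: $A^2$ is the degree-$2$ part of $A$, i.e. the free $k$-module with basis $t_1,\ldots,t_r$; its elements are called linear. $k$ is an $A$-module via the augmentation sending each $t_i$ to $0$. *)

theory Defs
  imports "HOL-Library.Poly_Mapping"
begin

text \<open>The polynomial ring A = k[t_i | i :: 'i] (with 'i finite, r = CARD('i)),
  realised as finitely supported maps from monomials (exponent vectors) to coefficients.\<close>
type_synonym ('i, 'k) mpoly = "('i \<Rightarrow>\<^sub>0 nat) \<Rightarrow>\<^sub>0 'k"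

definition var :: "'i \<Rightarrow> ('i, 'k::comm_ring_1) mpoly" where
  "var i = Poly_Mapping.single (Poly_Mapping.single i 1) 1"

definition const :: "'k::comm_ring_1 \<Rightarrow> ('i, 'k) mpoly" where
  "const c = Poly_Mapping.single 0 c"

text \<open>Total degree of a monomial; t_i has degree 2, so the monomial mu has degree 2 * mdeg mu.\<close>
definition mdeg :: "('i::finite \<Rightarrow>\<^sub>0 nat) \<Rightarrow> nat" where
  "mdeg mu = (\<Sum>i\<in>UNIV. Poly_Mapping.lookup mu i)"

text \<open>Elements of A^2 (linear elements): k-linear combinations of the t_i.\<close>
definition linear_elem :: "('i, 'k::comm_ring_1) mpoly \<Rightarrow> bool" where
  "linear_elem p \<longleftrightarrow> (\<forall>mu. Poly_Mapping.lookup p mu \<noteq> 0 \<longrightarrow> (\<exists>i. mu = Poly_Mapping.single i 1))"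

definition is_basis_A2 :: "('i, 'k::comm_ring_1) mpoly set \<Rightarrow> bool" where
  "is_basis_A2 B \<longleftrightarrow> B \<subseteq> {p. linear_elem p} \<and>
     (\<forall>p. linear_elem p \<longrightarrow>
        (\<exists>!c :: ('i, 'k) mpoly \<Rightarrow> 'k. {b. c b \<noteq> 0} \<subseteq> B \<and> finite {b. c b \<noteq> 0} \<and>
              p = (\<Sum>b\<in>{b. c b \<noteq> 0}. const (c b) * b)))"

definition extends_to_basis :: "('i, 'k::comm_ring_1) mpoly \<Rightarrow> bool" where
  "extends_to_basis l \<longleftrightarrow> linear_elem l \<and> (\<exists>B. is_basis_A2 B \<and> l \<in> B)"

definition S_set :: "('i, 'k::comm_ring_1) mpoly set" where
  "S_set = {prod_list ls | ls. set ls \<subseteq> {l. extends_to_basis l}}"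

definition is_module :: "(('i, 'k::comm_ring_1) mpoly \<Rightarrow> 'm::ab_group_add \<Rightarrow> 'm) \<Rightarrow> bool" where
  "is_module sm \<longleftrightarrow>
     (\<forall>a b m. sm (a + b) m = sm a m + sm b m) \<and>
     (\<forall>a m n. sm a (m + n) = sm a m + sm a n) \<and>
     (\<forall>a b m. sm (a * b) m = sm a (sm b m)) \<and>
     (\<forall>m. sm 1 m = m)"

definition is_graded_module ::
  "(('i::finite, 'k::comm_ring_1) mpoly \<Rightarrow> 'm::ab_group_add \<Rightarrow> 'm) \<Rightarrow> (int \<Rightarrow> 'm set) \<Rightarrow> bool" where
  "is_graded_module sm Md \<longleftrightarrow>
     is_module sm \<and>
     (\<forall>n. 0 \<in> Md n \<and> (\<forall>x\<in>Md n. \<forall>y\<in>Md n. x - y \<in> Md n)) \<and>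
     (\<forall>m. \<exists>!f :: int \<Rightarrow> 'm. finite {n. f n \<noteq> 0} \<and> (\<forall>n. f n \<in> Md n) \<and>
            m = (\<Sum>n\<in>{n. f n \<noteq> 0}. f n)) \<and>
     (\<forall>mu c n x. x \<in> Md n \<longrightarrow>
            sm (Poly_Mapping.single mu c) x \<in> Md (n + 2 * int (mdeg mu)))"

definition bounded_below :: "(int \<Rightarrow> 'm::zero set) \<Rightarrow> bool" where
  "bounded_below Md \<longleftrightarrow> (\<exists>n0. \<forall>n<n0. Md n = {0})"

text \<open>Tor^A_1(M,k) computed as H_1 of M tensored with the Koszul resolution K(t_1..t_r) of k:
  M \<otimes>_A K_1 = M^r, M \<otimes>_A K_2 = M \<otimes> \<Lambda>^2 A^r, with
  d_1(m) = \<Sum>_i t_i m_i and d_2(m \<otimes> e_j \<and> e_i) = t_j m e_i - t_i m e_j.\<close>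
definition koszul_cycles1 :: "(('i::finite, 'k::comm_ring_1) mpoly \<Rightarrow> 'm::ab_group_add \<Rightarrow> 'm) \<Rightarrow> ('i \<Rightarrow> 'm) set" where
  "koszul_cycles1 sm = {m. (\<Sum>i\<in>UNIV. sm (var i) (m i)) = 0}"

definition koszul_boundaries1 :: "(('i::finite, 'k::comm_ring_1) mpoly \<Rightarrow> 'm::ab_group_add \<Rightarrow> 'm) \<Rightarrow> ('i \<Rightarrow> 'm) set" where
  "koszul_boundaries1 sm =
     {(\<lambda>i. \<Sum>j\<in>UNIV. sm (var j) (x j i - x i j)) | x :: 'i \<Rightarrow> 'i \<Rightarrow> 'm. True}"

definition Tor1_vanishes :: "(('i::finite, 'k::comm_ring_1) mpoly \<Rightarrow> 'm::ab_group_add \<Rightarrow> 'm) \<Rightarrow> bool" where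
  "Tor1_vanishes sm \<longleftrightarrow> koszul_cycles1 sm \<subseteq> koszul_boundaries1 sm"

text \<open>Kernel of the localisation map M \<rightarrow> S^{-1}M: m/1 = 0 iff s m = 0 for some s \<in> S.\<close>
definition loc_kernel :: "(('i, 'k::comm_ring_1) mpoly \<Rightarrow> 'm::ab_group_add \<Rightarrow> 'm) \<Rightarrow> ('i, 'k) mpoly set \<Rightarrow> 'm set" where
  "loc_kernel sm S = {m. \<exists>s\<in>S. sm s m = 0}"

end

theory Submission
  imports Defs
begin

text \<open>Write H_1(f) = 0 for the vanishing of the first Koszul homology of M with respect to a
  family f of linear forms, in each degree. The hypothesis on Tor says H_1(t) = 0, and an invertible
  k-linear change of generators carries this over to H_1(B) = 0 for every basis B of A^2. Since M
  is bounded below, induction on the degree shows that H_1 = 0 passes from a family to any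
  subfamily; for the one-element family l it says that l is a nonzerodivisor on M. Hence so is
  every product of such l, i.e. every element of S.\<close>

lemma const_mult: "const a * const b = (const (a * b) :: ('i, 'k::comm_ring_1) mpoly)"
  unfolding const_def by (simp add: mult_single)

lemma const_0 [simp]: "const 0 = 0"
  unfolding const_def by simp

lemma const_1 [simp]: "const 1 = 1"
  unfolding const_def by simp

lemma const_sum: "const (\<Sum>x\<in>X. f x) = (\<Sum>x\<in>X. const (f x))"
  by (induction X rule: infinite_finite_induct) (auto simp: const_def single_add)

definition coef :: "('i, 'k::comm_ring_1) mpoly \<Rightarrow> 'i \<Rightarrow> 'k" where
  "coef p i = Poly_Mapping.lookup p (Poly_Mapping.single i 1)"

lemma linear_elem_var: "linear_elem (var i :: ('i, 'k::comm_ring_1) mpoly)"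
  unfolding linear_elem_def var_def by (auto simp: lookup_single when_def)

lemma linear_elem_expansion:
  fixes p :: "('i::finite, 'k::comm_ring_1) mpoly"
  assumes "linear_elem p"
  shows "p = (\<Sum>i\<in>UNIV. const (coef p i) * var i)"
proof (rule poly_mapping_eqI)
  fix mu
  have "Poly_Mapping.lookup (\<Sum>i\<in>UNIV. const (coef p i) * var i) mu =
      (\<Sum>i\<in>UNIV. if mu = Poly_Mapping.single i 1 then coef p i else 0)"
    unfolding lookup_sum
    by (rule sum.cong) (auto simp: const_def var_def mult_single lookup_single)
  also have "\<dots> = Poly_Mapping.lookup p mu"
  proof (cases "\<exists>i. mu = Poly_Mapping.single i 1")
    case True
    then obtain i0 where i0: "mu = Poly_Mapping.single i0 1" by blast
    have "(if mu = Poly_Mapping.single i 1 then coef p i else 0) = (if i = i0 then coef p i else 0)" for i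
      unfolding i0 by (metis lookup_single_eq lookup_single_not_eq one_neq_zero)
    then show ?thesis by (simp add: coef_def i0)
  next
    case False
    then show ?thesis using assms unfolding linear_elem_def by auto
  qed
  finally show "Poly_Mapping.lookup p mu = Poly_Mapping.lookup (\<Sum>i\<in>UNIV. const (coef p i) * var i) mu"
    by simp
qed

lemma linear_elem_in_coordinates:
  fixes p :: "('i::finite, 'k::comm_ring_1) mpoly"
  assumes "linear_elem p" and "\<And>i. var i = (\<Sum>b\<in>G. const (Q i b) * b)"
  shows "p = (\<Sum>b\<in>G. const (\<Sum>i\<in>UNIV. coef p i * Q i b) * b)"
proof -
  have "p = (\<Sum>i\<in>UNIV. \<Sum>b\<in>G. const (coef p i) * (const (Q i b) * b))"
    by (subst linear_elem_expansion[OF assms(1)]) (simp add: assms(2) sum_distrib_left)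
  also have "\<dots> = (\<Sum>b\<in>G. const (\<Sum>i\<in>UNIV. coef p i * Q i b) * b)"
    by (subst sum.swap) (simp add: const_sum sum_distrib_right const_mult[symmetric] mult.assoc)
  finally show ?thesis .
qed

lemma is_basis_A2_coordinates_unique:
  fixes B :: "('i, 'k::comm_ring_1) mpoly set"
  assumes basis: "is_basis_A2 B" and "finite G" "G \<subseteq> B" "linear_elem p"
    and c: "p = (\<Sum>b\<in>G. const (c b) * b)" and d: "p = (\<Sum>b\<in>G. const (d b) * b)"
    and "b \<in> G"
  shows "c b = d b"
proof -
  define coords where "coords e \<longleftrightarrow> {b. e b \<noteq> 0} \<subseteq> B \<and> finite {b. e b \<noteq> 0} \<and>
              p = (\<Sum>b\<in>{b. e b \<noteq> 0}. const (e b) * b)" for e :: "('i, 'k) mpoly \<Rightarrow> 'k"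
  have unique: "\<exists>!e. coords e"
    using basis \<open>linear_elem p\<close> unfolding is_basis_A2_def coords_def by blast
  have restrict: "coords (\<lambda>b. if b \<in> G then e b else 0)" if "p = (\<Sum>b\<in>G. const (e b) * b)" for e
  proof -
    let ?e = "\<lambda>b. if b \<in> G then e b else 0"
    have supp: "{b. ?e b \<noteq> 0} \<subseteq> G" by auto
    have "(\<Sum>b\<in>{b. ?e b \<noteq> 0}. const (?e b) * b) = (\<Sum>b\<in>G. const (?e b) * b)"
      by (rule sum.mono_neutral_left[OF \<open>finite G\<close> supp]) auto
    also have "\<dots> = p" using that by simp
    finally show ?thesis
      unfolding coords_def using supp \<open>G \<subseteq> B\<close> finite_subset[OF supp \<open>finite G\<close>] by auto
  qed
  have "(\<lambda>b. if b \<in> G then c b else 0) = (\<lambda>b. if b \<in> G then d b else 0)"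
    using unique restrict[OF c] restrict[OF d] by blast
  from fun_cong[OF this, of b] show ?thesis using \<open>b \<in> G\<close> by simp
qed

lemma is_basis_A2_coordinates_var:
  fixes B :: "('i::finite, 'k::comm_ring_1) mpoly set"
  assumes "is_basis_A2 B"
  obtains F Q where "finite F" "F \<subseteq> B" "\<And>i b. b \<notin> F \<Longrightarrow> Q i b = 0"
    "\<And>i. var i = (\<Sum>b\<in>F. const (Q i b) * b)"
proof -
  have "\<exists>c. {b. c b \<noteq> 0} \<subseteq> B \<and> finite {b. c b \<noteq> 0} \<and>
              var i = (\<Sum>b\<in>{b. c b \<noteq> 0}. const (c b) * (b :: ('i, 'k) mpoly))" for i
    using assms linear_elem_var[of i] unfolding is_basis_A2_def by (meson ex1_implies_ex)
  then have "\<forall>i. \<exists>c. {b. c b \<noteq> 0} \<subseteq> B \<and> finite {b. c b \<noteq> 0} \<and>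
              var i = (\<Sum>b\<in>{b. c b \<noteq> 0}. const (c b) * b)" ..
  from choice[OF this] obtain Q where supp: "\<And>i. {b. Q i b \<noteq> 0} \<subseteq> B" "\<And>i. finite {b. Q i b \<noteq> 0}"
    and expansion: "\<And>i. var i = (\<Sum>b\<in>{b. Q i b \<noteq> 0}. const (Q i b) * b)"
    by blast
  define F where "F = (\<Union>i. {b. Q i b \<noteq> 0})"
  have "finite F" "F \<subseteq> B" using supp unfolding F_def by auto
  moreover have "b \<notin> F \<Longrightarrow> Q i b = 0" for i b unfolding F_def by blast
  moreover have "var i = (\<Sum>b\<in>F. const (Q i b) * b)" for i
    unfolding expansion[of i] by (rule sum.mono_neutral_left[OF \<open>finite F\<close>]) (auto simp: F_def)
  ultimately show ?thesis by (rule that)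
qed

text \<open>Comparing the expansion of a basis element through the t_i with its trivial expansion
  shows that Q is a right inverse of the coefficient matrix; in particular every basis element
  occurs in the expansion of some t_i, so B is finite.\<close>
lemma is_basis_A2_dual_coordinates:
  fixes B :: "('i::finite, 'k::comm_ring_1) mpoly set"
  assumes basis: "is_basis_A2 B"
  obtains Q where "finite B" "\<And>i. var i = (\<Sum>b\<in>B. const (Q i b) * b)"
    "\<And>b b'. b \<in> B \<Longrightarrow> b' \<in> B \<Longrightarrow> (\<Sum>i\<in>UNIV. coef b' i * Q i b) = (if b = b' then 1 else 0)"
proof -
  obtain F Q where F: "finite F" "F \<subseteq> B" and Q0: "\<And>i b. b \<notin> F \<Longrightarrow> Q i b = 0"
    and QF: "\<And>i. var i = (\<Sum>b\<in>F. const (Q i b) * b)"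
    using is_basis_A2_coordinates_var[OF basis] by blast
  have QG: "var i = (\<Sum>b\<in>G. const (Q i b) * b)" if "finite G" "F \<subseteq> G" for G i
    unfolding QF[of i] by (rule sum.mono_neutral_left) (use that Q0 in auto)
  have dual: "(\<Sum>i\<in>UNIV. coef b' i * Q i b) = (if b = b' then 1 else 0)"
    if G: "finite G" "F \<subseteq> G" "G \<subseteq> B" and "b \<in> G" "b' \<in> G" for G b b'
  proof -
    have lin: "linear_elem b'"
      using basis \<open>b' \<in> G\<close> G(3) unfolding is_basis_A2_def by blast
    have "b' = (\<Sum>b\<in>G. const (\<Sum>i\<in>UNIV. coef b' i * Q i b) * b)"
      using linear_elem_in_coordinates[OF lin QG[OF G(1,2)]] .
    moreover have "b' = (\<Sum>b\<in>G. const (if b = b' then 1 else 0) * b)"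
    proof -
      have "(\<Sum>b\<in>G. const (if b = b' then 1 else 0) * b) = (\<Sum>b\<in>G. if b = b' then b else 0)"
        by (rule sum.cong) auto
      then show ?thesis using G(1) \<open>b' \<in> G\<close> by simp
    qed
    ultimately show ?thesis
      by (rule is_basis_A2_coordinates_unique[OF basis G(1,3) lin,
            where c = "\<lambda>b. \<Sum>i\<in>UNIV. coef b' i * Q i b" and d = "\<lambda>b. if b = b' then 1 else 0"])
         (fact \<open>b \<in> G\<close>)
  qed
  have "B \<subseteq> F"
  proof
    fix b assume "b \<in> B"
    then have "(\<Sum>i\<in>UNIV. coef b i * Q i b) = 1"
      using dual[of "insert b F" b b] F by (simp add: subset_insertI)
    then have "\<exists>i. Q i b \<noteq> 0"
      by (rule contrapos_pp) simp
    then show "b \<in> F" using Q0 by blast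
  qed
  with F have "B = F" by blast
  show ?thesis
  proof (rule that)
    show "finite B" using F \<open>B = F\<close> by simp
    show "var i = (\<Sum>b\<in>B. const (Q i b) * b)" for i using QF \<open>B = F\<close> by simp
    show "(\<Sum>i\<in>UNIV. coef b' i * Q i b) = (if b = b' then 1 else 0)" if "b \<in> B" "b' \<in> B" for b b'
      using dual[of B b b'] that F \<open>B = F\<close> by simp
  qed
qed

lemma int_induct_from_below:
  fixes n0 n :: int
  assumes below: "\<And>n. n < n0 \<Longrightarrow> P n" and step: "\<And>n. P (n - 2) \<Longrightarrow> P n"
  shows "P n"
proof (induction "nat (n - n0)" arbitrary: n rule: less_induct)
  case less
  have "P (n - 2)"
  proof (cases "n - 2 < n0")
    case True
    then show ?thesis by (rule below)
  next
    case False
    then have "nat (n - 2 - n0) < nat (n - n0)" by simp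
    then show ?thesis by (rule less)
  qed
  then show ?case by (rule step)
qed

locale graded_module =
  fixes sm :: "('i::finite, 'k::comm_ring_1) mpoly \<Rightarrow> 'm::ab_group_add \<Rightarrow> 'm"
    and Md :: "int \<Rightarrow> 'm set"
  assumes graded: "is_graded_module sm Md"
begin

lemma module: "is_module sm"
  using graded unfolding is_graded_module_def by blast

lemma sm_add_left: "sm (a + b) x = sm a x + sm b x"
  using module unfolding is_module_def by blast

lemma sm_add_right: "sm a (x + y) = sm a x + sm a y"
  using module unfolding is_module_def by blast

lemma sm_mult: "sm (a * b) x = sm a (sm b x)"
  using module unfolding is_module_def by blast

lemma sm_one: "sm 1 x = x"
  using module unfolding is_module_def by blast

lemma sm_zero_left: "sm 0 x = 0"
  using sm_add_left[of 0 0 x] by simp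

lemma sm_zero_right: "sm a 0 = 0"
  using sm_add_right[of a 0 0] by simp

lemma sm_diff_right: "sm a (x - y) = sm a x - sm a y"
  using sm_add_right[of a "x - y" y] by (simp add: algebra_simps)

lemma sm_sum_left: "sm (\<Sum>j\<in>J. p j) x = (\<Sum>j\<in>J. sm (p j) x)"
  by (induction J rule: infinite_finite_induct) (auto simp: sm_zero_left sm_add_left)

lemma sm_sum_right: "sm a (\<Sum>j\<in>J. x j) = (\<Sum>j\<in>J. sm a (x j))"
  by (induction J rule: infinite_finite_induct) (auto simp: sm_zero_right sm_add_right)

lemma sm_commute: "sm a (sm b x) = sm b (sm a x)"
  by (metis sm_mult mult.commute)

lemma Md_zero: "0 \<in> Md n"
  using graded unfolding is_graded_module_def by blast

lemma Md_diff: "x \<in> Md n \<Longrightarrow> y \<in> Md n \<Longrightarrow> x - y \<in> Md n"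
  using graded unfolding is_graded_module_def by blast

lemma Md_add: "x \<in> Md n \<Longrightarrow> y \<in> Md n \<Longrightarrow> x + y \<in> Md n"
  using Md_diff[of x n "0 - y"] Md_diff[of 0 n y] Md_zero by simp

lemma Md_sum: "(\<And>j. j \<in> J \<Longrightarrow> x j \<in> Md n) \<Longrightarrow> (\<Sum>j\<in>J. x j) \<in> Md n"
  by (induction J rule: infinite_finite_induct) (auto simp: Md_zero Md_add)

lemma sm_monomial_Md:
  "x \<in> Md n \<Longrightarrow> sm (Poly_Mapping.single mu c) x \<in> Md (n + 2 * int (mdeg mu))"
  using graded unfolding is_graded_module_def by blast

lemma sm_const_Md: "x \<in> Md n \<Longrightarrow> sm (const c) x \<in> Md n"
  using sm_monomial_Md[of x n 0 c] by (simp add: const_def mdeg_def)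

lemma sm_const_mult: "sm (const c) (sm (const c') x) = sm (const (c * c')) x"
  by (simp add: sm_mult[symmetric] const_mult)

definition raises_degree_by_2 :: "('i, 'k) mpoly \<Rightarrow> bool" where
  "raises_degree_by_2 p \<longleftrightarrow> (\<forall>n x. x \<in> Md n \<longrightarrow> sm p x \<in> Md (n + 2))"

lemma raises_degree_by_2_var: "raises_degree_by_2 (var i)"
proof -
  have "mdeg (Poly_Mapping.single i (1::nat)) = 1"
    by (simp add: mdeg_def lookup_single when_def)
  then show ?thesis
    unfolding raises_degree_by_2_def var_def
    using sm_monomial_Md[where mu = "Poly_Mapping.single i 1" and c = 1] by simp
qed

lemma raises_degree_by_2_linear:
  assumes "linear_elem p"
  shows "raises_degree_by_2 p"
  unfolding raises_degree_by_2_def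
proof (intro allI impI)
  fix n x assume "x \<in> Md n"
  have "sm p x = (\<Sum>i\<in>UNIV. sm (const (coef p i)) (sm (var i) x))"
    by (subst linear_elem_expansion[OF assms]) (simp add: sm_sum_left sm_mult)
  also have "\<dots> \<in> Md (n + 2)"
    using raises_degree_by_2_var \<open>x \<in> Md n\<close>
    unfolding raises_degree_by_2_def by (blast intro: Md_sum sm_const_Md)
  finally show "sm p x \<in> Md (n + 2)" .
qed

definition component :: "'m \<Rightarrow> int \<Rightarrow> 'm" where
  "component x = (THE f. finite {n. f n \<noteq> 0} \<and> (\<forall>n. f n \<in> Md n) \<and> x = (\<Sum>n\<in>{n. f n \<noteq> 0}. f n))"

lemma graded_decomposition_unique:
  "\<exists>!f. finite {n. f n \<noteq> 0} \<and> (\<forall>n. f n \<in> Md n) \<and> x = (\<Sum>n\<in>{n. f n \<noteq> 0}. f n)"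
  using graded unfolding is_graded_module_def by (elim conjE) (erule spec)

lemma component_unique:
  assumes "finite N" "\<And>n. f n \<in> Md n" "\<And>n. n \<notin> N \<Longrightarrow> f n = 0" "x = (\<Sum>n\<in>N. f n)"
  shows "component x = f"
  unfolding component_def
proof (rule the1_equality[OF graded_decomposition_unique])
  have supp: "{n. f n \<noteq> 0} \<subseteq> N" using assms(3) by blast
  have "(\<Sum>n\<in>{n. f n \<noteq> 0}. f n) = (\<Sum>n\<in>N. f n)"
    by (rule sum.mono_neutral_left[OF assms(1) supp]) auto
  then show "finite {n. f n \<noteq> 0} \<and> (\<forall>n. f n \<in> Md n) \<and> x = (\<Sum>n\<in>{n. f n \<noteq> 0}. f n)"
    using finite_subset[OF supp assms(1)] assms(2,4) by simp
qed

lemma component_decomposition: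
  "finite {n. component x n \<noteq> 0} \<and> (\<forall>n. component x n \<in> Md n) \<and>
    x = (\<Sum>n\<in>{n. component x n \<noteq> 0}. component x n)"
  unfolding component_def by (rule theI'[OF graded_decomposition_unique])

lemma component_Md: "component x n \<in> Md n"
  using component_decomposition by blast

lemma sum_components:
  assumes "finite N" "\<And>n. n \<notin> N \<Longrightarrow> component x n = 0"
  shows "x = (\<Sum>n\<in>N. component x n)"
proof -
  have "(\<Sum>n\<in>{n. component x n \<noteq> 0}. component x n) = (\<Sum>n\<in>N. component x n)"
    by (rule sum.mono_neutral_left[OF assms(1)]) (use assms(2) in auto)
  then show ?thesis using component_decomposition by metis
qed

lemma component_homogeneous: "x \<in> Md n \<Longrightarrow> component x n = x"
  using component_unique[of "{n}" "\<lambda>k. if k = n then x else 0" x] Md_zero by auto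

lemma eq_0_if_components_0: "(\<And>n. component x n = 0) \<Longrightarrow> x = 0"
  using component_decomposition[of x] by simp

lemma component_add: "component (x + y) n = component x n + component y n"
proof -
  define N where "N = {n. component x n \<noteq> 0} \<union> {n. component y n \<noteq> 0}"
  have "finite N" using component_decomposition unfolding N_def by blast
  have "component (x + y) = (\<lambda>n. component x n + component y n)"
  proof (rule component_unique[OF \<open>finite N\<close>])
    have "x = (\<Sum>n\<in>N. component x n)" "y = (\<Sum>n\<in>N. component y n)"
      by (rule sum_components[OF \<open>finite N\<close>], simp add: N_def)+
    then show "x + y = (\<Sum>n\<in>N. component x n + component y n)"
      unfolding sum.distrib by (rule arg_cong2[where f = "(+)"])
  qed (auto simp: N_def intro: Md_add component_Md)
  then show ?thesis by simp
qed

lemma component_zero: "component 0 n = 0"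
  using component_add[of 0 0 n] by simp

lemma component_diff: "component (x - y) n = component x n - component y n"
  using component_add[of "x - y" y n] by simp

lemma component_sum: "component (\<Sum>j\<in>J. x j) n = (\<Sum>j\<in>J. component (x j) n)"
  by (induction J rule: infinite_finite_induct) (auto simp: component_zero component_add)

lemma component_action:
  assumes "raises_degree_by_2 p"
  shows "component (sm p x) (n + 2) = sm p (component x n)"
proof -
  define N where "N = {n. component x n \<noteq> 0}"
  have "finite N" using component_decomposition unfolding N_def by blast
  have "component (sm p x) = (\<lambda>k. sm p (component x (k - 2)))"
  proof (rule component_unique[of "(\<lambda>k. k + 2) ` N"])
    show "sm p (component x (k - 2)) \<in> Md k" for k
      using assms component_Md[of x "k - 2"] unfolding raises_degree_by_2_def by force
    show "sm p (component x (k - 2)) = 0" if "k \<notin> (\<lambda>k. k + 2) ` N" for k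
    proof -
      have "k - 2 \<notin> N" using that by force
      then show ?thesis by (simp add: N_def sm_zero_right)
    qed
    have "sm p x = (\<Sum>n\<in>N. sm p (component x n))"
      by (subst sum_components[OF \<open>finite N\<close>, of x]) (auto simp: N_def sm_sum_right)
    also have "\<dots> = (\<Sum>k\<in>(\<lambda>k. k + 2) ` N. sm p (component x (k - 2)))"
      by (simp add: sum.reindex)
    finally show "sm p x = (\<Sum>k\<in>(\<lambda>k. k + 2) ` N. sm p (component x (k - 2)))" .
  qed (use \<open>finite N\<close> in simp)
  then show ?thesis by simp
qed

definition koszul_d1 :: "'j set \<Rightarrow> ('j \<Rightarrow> ('i, 'k) mpoly) \<Rightarrow> ('j \<Rightarrow> 'm) \<Rightarrow> 'm" where
  "koszul_d1 J f m = (\<Sum>j\<in>J. sm (f j) (m j))"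

definition koszul_d2 :: "'j set \<Rightarrow> ('j \<Rightarrow> ('i, 'k) mpoly) \<Rightarrow> ('j \<Rightarrow> 'j \<Rightarrow> 'm) \<Rightarrow> 'j \<Rightarrow> 'm" where
  "koszul_d2 J f x i = (\<Sum>j\<in>J. sm (f j) (x j i - x i j))"

text \<open>Asking for a boundary of degree n - 2, not just any boundary, is what makes induction on
  the degree possible.\<close>
definition koszul_H1_vanishes_in_degree :: "'j set \<Rightarrow> ('j \<Rightarrow> ('i, 'k) mpoly) \<Rightarrow> int \<Rightarrow> bool" where
  "koszul_H1_vanishes_in_degree J f n \<longleftrightarrow>
     (\<forall>m. (\<forall>j\<in>J. m j \<in> Md n) \<longrightarrow> koszul_d1 J f m = 0 \<longrightarrow>
       (\<exists>x. (\<forall>i j. x i j \<in> Md (n - 2)) \<and> (\<forall>i\<in>J. m i = koszul_d2 J f x i)))"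

definition koszul_H1_vanishes :: "'j set \<Rightarrow> ('j \<Rightarrow> ('i, 'k) mpoly) \<Rightarrow> bool" where
  "koszul_H1_vanishes J f \<longleftrightarrow> (\<forall>n. koszul_H1_vanishes_in_degree J f n)"

lemma koszul_H1_vanishesD:
  assumes "koszul_H1_vanishes J f" "\<And>j. j \<in> J \<Longrightarrow> m j \<in> Md n" "koszul_d1 J f m = 0"
  shows "\<exists>x. (\<forall>i j. x i j \<in> Md (n - 2)) \<and> (\<forall>i\<in>J. m i = koszul_d2 J f x i)"
  using assms unfolding koszul_H1_vanishes_def koszul_H1_vanishes_in_degree_def by blast

lemma koszul_d2_diff:
  "koszul_d2 J f (\<lambda>j i. x j i - y j i) i = koszul_d2 J f x i - koszul_d2 J f y i"
  unfolding koszul_d2_def sum_subtractf[symmetric]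
  by (intro sum.cong refl) (simp add: sm_diff_right[symmetric] algebra_simps)

lemma koszul_d2_action:
  "koszul_d2 J f (\<lambda>j i. sm p (x j i)) i = sm p (koszul_d2 J f x i)"
  unfolding koszul_d2_def by (simp add: sm_sum_right sm_diff_right sm_commute)

lemma component_koszul_d2:
  assumes "\<And>j. j \<in> J \<Longrightarrow> raises_degree_by_2 (f j)"
  shows "component (koszul_d2 J f x i) (n + 2) = koszul_d2 J f (\<lambda>j i. component (x j i) n) i"
  unfolding koszul_d2_def component_sum
  by (rule sum.cong) (simp_all add: component_action assms component_diff)

lemma koszul_H1_vanishes_var:
  assumes "Tor1_vanishes sm"
  shows "koszul_H1_vanishes UNIV var"
  unfolding koszul_H1_vanishes_def koszul_H1_vanishes_in_degree_def
proof (intro allI impI)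
  fix n and m :: "'i \<Rightarrow> 'm"
  assume "\<forall>j\<in>UNIV. m j \<in> Md n" and "koszul_d1 UNIV var m = 0"
  then have "m \<in> koszul_boundaries1 sm"
    using assms unfolding Tor1_vanishes_def koszul_cycles1_def koszul_d1_def by blast
  then obtain x where x: "m = koszul_d2 UNIV var x"
    unfolding koszul_boundaries1_def koszul_d2_def by blast
  define y where "y j i = component (x j i) (n - 2)" for j i
  have "m i = koszul_d2 UNIV var y i" for i
  proof -
    have "m i = component (koszul_d2 UNIV var x i) (n - 2 + 2)"
      using component_homogeneous \<open>\<forall>j\<in>UNIV. m j \<in> Md n\<close> x by simp
    also have "\<dots> = koszul_d2 UNIV var y i"
      unfolding y_def by (rule component_koszul_d2) (rule raises_degree_by_2_var)
    finally show ?thesis .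
  qed
  moreover have "\<forall>i j. y i j \<in> Md (n - 2)" by (simp add: y_def component_Md)
  ultimately show "\<exists>y. (\<forall>i j. y i j \<in> Md (n - 2)) \<and> (\<forall>i\<in>UNIV. m i = koszul_d2 UNIV var y i)"
    by blast
qed

lemma koszul_d1_change_of_generators:
  assumes "\<And>b. b \<in> J' \<Longrightarrow> g b = (\<Sum>j\<in>J. const (P b j) * f j)"
  shows "koszul_d1 J f (\<lambda>j. \<Sum>b\<in>J'. sm (const (P b j)) (m b)) = koszul_d1 J' g m"
proof -
  have "koszul_d1 J f (\<lambda>j. \<Sum>b\<in>J'. sm (const (P b j)) (m b)) =
      (\<Sum>b\<in>J'. \<Sum>j\<in>J. sm (const (P b j) * f j) (m b))"
    unfolding koszul_d1_def by (subst sum.swap) (simp add: sm_sum_right sm_mult sm_commute)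
  also have "\<dots> = koszul_d1 J' g m"
    unfolding koszul_d1_def by (rule sum.cong) (simp_all add: assms sm_sum_left)
  finally show ?thesis .
qed

lemma koszul_d2_change_of_generators:
  assumes f: "\<And>j. j \<in> J \<Longrightarrow> f j = (\<Sum>b\<in>J'. const (Q j b) * g b)"
  shows "(\<Sum>i\<in>J. sm (const (Q i b)) (koszul_d2 J f x i)) =
    koszul_d2 J' g (\<lambda>b' b. \<Sum>a\<in>J. \<Sum>i\<in>J. sm (const (Q i b * Q a b')) (x a i)) b"
proof -
  let ?x = "\<lambda>b' b. \<Sum>a\<in>J. \<Sum>i\<in>J. sm (const (Q i b * Q a b')) (x a i)"
  let ?z = "\<lambda>b' a i. sm (const (Q i b * Q a b')) (x a i - x i a)"
  have fa: "sm (const c) (sm (f a) v) = (\<Sum>b'\<in>J'. sm (g b') (sm (const (c * Q a b')) v))"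
    if "a \<in> J" for a c v
    unfolding f[OF that] sm_sum_left sm_sum_right
    by (intro sum.cong refl) (simp add: sm_mult sm_const_mult sm_commute[of "const _" "g _"])
  have "(\<Sum>i\<in>J. sm (const (Q i b)) (koszul_d2 J f x i)) = (\<Sum>i\<in>J. \<Sum>a\<in>J. \<Sum>b'\<in>J'. sm (g b') (?z b' a i))"
    unfolding koszul_d2_def sm_sum_right by (intro sum.cong refl) (simp add: fa)
  also have "\<dots> = (\<Sum>a\<in>J. \<Sum>i\<in>J. \<Sum>b'\<in>J'. sm (g b') (?z b' a i))"
    by (rule sum.swap)
  also have "\<dots> = (\<Sum>a\<in>J. \<Sum>b'\<in>J'. \<Sum>i\<in>J. sm (g b') (?z b' a i))"
    by (rule sum.cong[OF refl], rule sum.swap)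
  also have "\<dots> = (\<Sum>b'\<in>J'. sm (g b') (\<Sum>a\<in>J. \<Sum>i\<in>J. ?z b' a i))"
    by (subst sum.swap) (simp add: sm_sum_right)
  also have "\<dots> = koszul_d2 J' g ?x b"
  proof -
    have "?x b b' = (\<Sum>a\<in>J. \<Sum>i\<in>J. sm (const (Q i b * Q a b')) (x i a))" for b'
      by (subst sum.swap) (simp add: mult.commute)
    then have "?x b' b - ?x b b' = (\<Sum>a\<in>J. \<Sum>i\<in>J. ?z b' a i)" for b'
      by (simp add: sm_diff_right sum_subtractf)
    then show ?thesis unfolding koszul_d2_def by simp
  qed
  finally show ?thesis .
qed

lemma koszul_H1_vanishes_change_of_generators:
  assumes H: "koszul_H1_vanishes J f"
    and g: "\<And>b. b \<in> J' \<Longrightarrow> g b = (\<Sum>j\<in>J. const (P b j) * f j)"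
    and f: "\<And>j. j \<in> J \<Longrightarrow> f j = (\<Sum>b\<in>J'. const (Q j b) * g b)"
    and PQ: "\<And>b b'. b \<in> J' \<Longrightarrow> b' \<in> J' \<Longrightarrow> (\<Sum>j\<in>J. P b' j * Q j b) = (if b = b' then 1 else 0)"
    and "finite J'"
  shows "koszul_H1_vanishes J' g"
  unfolding koszul_H1_vanishes_def koszul_H1_vanishes_in_degree_def
proof (intro allI impI)
  fix n m assume m: "\<forall>b\<in>J'. m b \<in> Md n" and cycle: "koszul_d1 J' g m = 0"
  define y where "y j = (\<Sum>b\<in>J'. sm (const (P b j)) (m b))" for j
  have "y j \<in> Md n" if "j \<in> J" for j
    unfolding y_def using m by (blast intro: Md_sum sm_const_Md)
  moreover have "koszul_d1 J f y = 0"
    using koszul_d1_change_of_generators[OF g, where m = m] cycle unfolding y_def by simp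
  ultimately obtain x where x: "\<And>i j. x i j \<in> Md (n - 2)" and y: "\<And>i. i \<in> J \<Longrightarrow> y i = koszul_d2 J f x i"
    using koszul_H1_vanishesD[OF H, of y n] by blast
  let ?x = "\<lambda>b' b. \<Sum>a\<in>J. \<Sum>i\<in>J. sm (const (Q i b * Q a b')) (x a i)"
  have "m b = koszul_d2 J' g ?x b" if "b \<in> J'" for b
  proof -
    have "(\<Sum>i\<in>J. sm (const (Q i b)) (y i)) = (\<Sum>b'\<in>J'. sm (const (\<Sum>i\<in>J. P b' i * Q i b)) (m b'))"
      unfolding y_def sm_sum_right sm_const_mult
      by (subst sum.swap) (simp add: const_sum sm_sum_left mult.commute)
    also have "\<dots> = (\<Sum>b'\<in>J'. if b' = b then m b' else 0)"
      by (intro sum.cong refl) (auto simp: PQ that sm_one sm_zero_left)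
    also have "\<dots> = m b"
      using \<open>finite J'\<close> that by simp
    finally have "m b = (\<Sum>i\<in>J. sm (const (Q i b)) (koszul_d2 J f x i))"
      using y by simp
    then show ?thesis using koszul_d2_change_of_generators[OF f] by simp
  qed
  moreover have "\<forall>b' b. ?x b' b \<in> Md (n - 2)"
    using x by (blast intro: Md_sum sm_const_Md)
  ultimately show "\<exists>x. (\<forall>i j. x i j \<in> Md (n - 2)) \<and> (\<forall>i\<in>J'. m i = koszul_d2 J' g x i)"
    by (intro exI[of _ ?x]) blast
qed

lemma koszul_H1_vanishes_in_degree_trivial:
  assumes "Md n = {0}"
  shows "koszul_H1_vanishes_in_degree J f n"
  unfolding koszul_H1_vanishes_in_degree_def
proof (intro allI impI)
  fix m assume "\<forall>j\<in>J. m j \<in> Md n"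
  then have "\<forall>i\<in>J. m i = koszul_d2 J f (\<lambda>_ _. 0) i"
    using assms by (simp add: koszul_d2_def sm_zero_right)
  then show "\<exists>x. (\<forall>i j. x i j \<in> Md (n - 2)) \<and> (\<forall>i\<in>J. m i = koszul_d2 J f x i)"
    by (intro exI[of _ "\<lambda>_ _. 0"]) (simp add: Md_zero)
qed

text \<open>Extend a cycle on J by zero, bound it on insert a J, and correct the boundary by
  sm (f a) w, where w bounds the a-th component of the boundary (a cycle of degree n - 2).\<close>
lemma koszul_H1_vanishes_in_degree_remove:
  assumes "finite J" "a \<notin> J" and H: "koszul_H1_vanishes (insert a J) f"
    and fa: "raises_degree_by_2 (f a)" and IH: "koszul_H1_vanishes_in_degree J f (n - 2)"
  shows "koszul_H1_vanishes_in_degree J f n"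
  unfolding koszul_H1_vanishes_in_degree_def
proof (intro allI impI)
  fix m assume m: "\<forall>j\<in>J. m j \<in> Md n" and cycle: "koszul_d1 J f m = 0"
  let ?m = "m(a := 0)"
  have "j \<in> insert a J \<Longrightarrow> ?m j \<in> Md n" for j using m Md_zero by auto
  moreover have "koszul_d1 (insert a J) f ?m = 0"
  proof -
    have "koszul_d1 (insert a J) f ?m = (\<Sum>j\<in>J. sm (f j) (?m j))"
      using assms(1,2) by (simp add: koszul_d1_def sm_zero_right)
    also have "\<dots> = koszul_d1 J f m"
      unfolding koszul_d1_def using assms(2) by (intro sum.cong) auto
    finally show ?thesis using cycle by simp
  qed
  ultimately obtain x where x: "\<And>i j. x i j \<in> Md (n - 2)"
    and bd: "\<And>i. i \<in> insert a J \<Longrightarrow> ?m i = koszul_d2 (insert a J) f x i"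
    using koszul_H1_vanishesD[OF H, of ?m n] by blast
  define y where "y j = x j a - x a j" for j
  have "koszul_d1 J f y = koszul_d2 (insert a J) f x a"
    using assms(1,2) by (simp add: koszul_d1_def koszul_d2_def y_def sm_zero_right)
  also have "\<dots> = 0" using bd[of a] by simp
  finally obtain w where w: "\<And>i j. w i j \<in> Md (n - 2 - 2)" and y: "\<And>i. i \<in> J \<Longrightarrow> y i = koszul_d2 J f w i"
    using IH x Md_diff unfolding koszul_H1_vanishes_in_degree_def y_def by meson
  define x' where "x' j i = x j i - sm (f a) (w j i)" for j i
  have "x' i j \<in> Md (n - 2)" for i j
    using fa w[of i j] x[of i j] Md_diff unfolding raises_degree_by_2_def x'_def by fastforce
  moreover have "m i = koszul_d2 J f x' i" if "i \<in> J" for i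
  proof -
    have "m i = sm (f a) (x a i - x i a) + koszul_d2 J f x i"
      using bd[of i] that assms(1,2) by (auto simp: koszul_d2_def split: if_splits)
    also have "\<dots> = koszul_d2 J f x i - sm (f a) (koszul_d2 J f w i)"
    proof -
      have "sm (f a) (x a i - x i a) = - sm (f a) (y i)"
        using sm_add_right[of "f a" "x a i - x i a" "y i"]
        by (simp add: y_def sm_zero_right eq_neg_iff_add_eq_0)
      then show ?thesis using y[OF that] by simp
    qed
    also have "\<dots> = koszul_d2 J f x' i"
      unfolding x'_def koszul_d2_diff koszul_d2_action ..
    finally show ?thesis .
  qed
  ultimately show "\<exists>x. (\<forall>i j. x i j \<in> Md (n - 2)) \<and> (\<forall>i\<in>J. m i = koszul_d2 J f x i)"
    by blast
qed

lemma koszul_H1_vanishes_remove: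
  assumes "bounded_below Md" "finite J" "a \<notin> J" "koszul_H1_vanishes (insert a J) f"
    "raises_degree_by_2 (f a)"
  shows "koszul_H1_vanishes J f"
proof -
  obtain n0 where "\<And>n. n < n0 \<Longrightarrow> Md n = {0}"
    using assms(1) unfolding bounded_below_def by blast
  then have "koszul_H1_vanishes_in_degree J f n" for n
    using int_induct_from_below[of n0 "koszul_H1_vanishes_in_degree J f"]
      koszul_H1_vanishes_in_degree_trivial koszul_H1_vanishes_in_degree_remove[OF assms(2-5)]
    by blast
  then show ?thesis unfolding koszul_H1_vanishes_def by blast
qed

lemma koszul_H1_vanishes_subset:
  assumes "bounded_below Md" "finite J" "koszul_H1_vanishes J f"
    and "\<And>j. j \<in> J \<Longrightarrow> raises_degree_by_2 (f j)" "K \<subseteq> J"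
  shows "koszul_H1_vanishes K f"
proof -
  have "koszul_H1_vanishes (K \<union> D) f \<longrightarrow> koszul_H1_vanishes K f" if "finite D" "D \<subseteq> J - K" for D
    using that
  proof (induction D rule: finite_subset_induct')
    case (insert d D)
    have "finite (K \<union> D)"
      using insert.hyps(3) assms(2,5) finite_subset[of "K \<union> D" J] by blast
    then show ?case
      using insert koszul_H1_vanishes_remove[OF assms(1), of "K \<union> D" d f] assms(4) by auto
  qed simp
  moreover have "K \<union> (J - K) = J" using assms(5) by blast
  ultimately show ?thesis using assms(2,3) by (metis finite_Diff order_refl)
qed

lemma koszul_H1_vanishes_singleton_cancel:
  assumes H: "koszul_H1_vanishes {l} f" and "raises_degree_by_2 (f l)" and "sm (f l) x = 0"
  shows "x = 0"
proof -
  have homogeneous: "y = 0" if "y \<in> Md n" "sm (f l) y = 0" for y n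
  proof -
    have "\<exists>z. (\<forall>i j. z i j \<in> Md (n - 2)) \<and> (\<forall>i\<in>{l}. y = koszul_d2 {l} f z i)"
      by (rule koszul_H1_vanishesD[OF H]) (use that in \<open>simp_all add: koszul_d1_def\<close>)
    then obtain z where "y = koszul_d2 {l} f z l" by blast
    then show ?thesis by (simp add: koszul_d2_def sm_zero_right)
  qed
  have "sm (f l) (component x n) = 0" for n
    using component_action[OF assms(2), of x n] assms(3) component_zero by simp
  then show ?thesis
    using homogeneous component_Md eq_0_if_components_0 by blast
qed

lemma extends_to_basis_cancel:
  assumes "bounded_below Md" "Tor1_vanishes sm" "extends_to_basis l" "sm l x = 0"
  shows "x = 0"
proof -
  obtain B where basis: "is_basis_A2 B" and "l \<in> B"
    using assms(3) unfolding extends_to_basis_def by blast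
  obtain Q where "finite B" and var_B: "\<And>i. var i = (\<Sum>b\<in>B. const (Q i b) * b)"
    and dual: "\<And>b b'. b \<in> B \<Longrightarrow> b' \<in> B \<Longrightarrow> (\<Sum>i\<in>UNIV. coef b' i * Q i b) = (if b = b' then 1 else 0)"
    using is_basis_A2_dual_coordinates[OF basis] by blast
  have linear: "linear_elem b" if "b \<in> B" for b
    using basis that unfolding is_basis_A2_def by blast
  have "koszul_H1_vanishes B id"
  proof (rule koszul_H1_vanishes_change_of_generators[OF koszul_H1_vanishes_var[OF assms(2)]])
    show "id b = (\<Sum>i\<in>UNIV. const (coef b i) * var i)" if "b \<in> B" for b
      using linear_elem_expansion[OF linear[OF that]] by simp
    show "var i = (\<Sum>b\<in>B. const (Q i b) * id b)" for i
      using var_B by simp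
  qed (use dual \<open>finite B\<close> in auto)
  then have "koszul_H1_vanishes {l} id"
    by (rule koszul_H1_vanishes_subset[OF assms(1) \<open>finite B\<close>])
       (use linear raises_degree_by_2_linear \<open>l \<in> B\<close> in auto)
  moreover have "raises_degree_by_2 (id l)"
    using raises_degree_by_2_linear linear \<open>l \<in> B\<close> by simp
  ultimately show ?thesis
    by (rule koszul_H1_vanishes_singleton_cancel) (simp add: assms(4))
qed

lemma S_set_cancel:
  assumes "bounded_below Md" "Tor1_vanishes sm" "s \<in> S_set" "sm s x = 0"
  shows "x = 0"
proof -
  obtain ls where "set ls \<subseteq> {l. extends_to_basis l}" "s = prod_list ls"
    using assms(3) unfolding S_set_def by blast
  then show ?thesis
    using assms(4)
  proof (induction ls arbitrary: s x)
    case Nil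
    then show ?case by (simp add: sm_one)
  next
    case (Cons l ls)
    then have "sm l (sm (prod_list ls) x) = 0" by (simp add: sm_mult)
    then have "sm (prod_list ls) x = 0"
      using extends_to_basis_cancel[OF assms(1,2)] Cons.prems(1) by auto
    then show ?case using Cons by simp
  qed
qed

end

theorem lemma2p5:
  fixes sm :: "('i::finite, 'k::comm_ring_1) mpoly \<Rightarrow> 'm::ab_group_add \<Rightarrow> 'm"
    and Md :: "int \<Rightarrow> 'm set"
  assumes "is_graded_module sm Md"
    and "bounded_below Md"
    and "Tor1_vanishes sm"
  shows "loc_kernel sm (S_set :: ('i, 'k) mpoly set) = {0}"
proof -
  interpret graded_module sm Md by (rule graded_module.intro) (fact assms(1))
  have "1 \<in> (S_set :: ('i, 'k) mpoly set)"
    unfolding S_set_def by (auto intro: exI[of _ "[]"])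
  then show ?thesis
    using S_set_cancel[OF assms(2,3)] sm_zero_right unfolding loc_kernel_def by blast
qed

end
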